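(* In any execution of Algorithm FS, let $v\in V_A^0$ and let $t$ be a round such that $c_t(v)\ge c_t(w)$ for every node $w\ne v$ active in round $t$. Then for every round $t'>t$ and every node $w$ active in round $t'$, $c_{t'}(v)\ge c_{t'}(w)$.
   Context: Model (beeping model with arbitrary activations). $G=(V,E)$ finite connected undirected graph; synchronous rounds; in each round each active node either beeps or listens; a listening node learns only whether at least one neighbor beeped. $T\ge 4$; checkpoints $\mathit{CP}=\{c\in\mathbb{N}_0: c\equiv 0\pmod 4,\ T-c>3\}$. Algorithm FS. Each node $v$ stores $\delta(v)\in\{0,\dots,T-1\}$, $\mathit{State}(v)\in\{\mathit{Inactive},\mathit{Beep},\mathit{Listen}\}$, $\mathit{Induced}(v)\in\{\mathit{true},\mathit{false}\}$. Initially all nodes are Inactive. A node $v$ is activated in round $t$ if the adversary activates it in round $t$, or $v$ is inactive and some neighbor beeps in round $t-1$; then at the beginning of round $t$, $\delta(v)=1$, $\mathit{State}(v)=\mathit{Beep}$, $\mathit{Induced}(v)=\mathit{true}$. In each round each active node $v$, according to its state at the beginning of the round: (1) if $\mathit{State}(v)=\mathit{Beep}$: beeps; $\delta(v)\gets\delta(v)+1\bmod T$; $\mathit{State}(v)\gets\mathit{Listen}$; (2) if $\mathit{State}(v)=\mathit{Listen}$ and some neighbor beeps: if $\delta(v)\equiv c-1\pmod T$ for some $c\in\mathit{CP}$, then $\delta(v)\gets\delta(v)+2\bmod T$, $\mathit{State}(v)\gets\mathit{Beep}$, $\mathit{Induced}(v)\gets\mathit{true}$; else $\delta(v)\gets\delta(v)+1\bmod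 T$; (3) if $\mathit{State}(v)=\mathit{Listen}$ and no neighbor beeps: $\delta(v)\gets\delta(v)+1\bmod T$; then if ($\mathit{Induced}(v)=\mathit{true}$ and new $\delta(v)\in\mathit{CP}$) or new $\delta(v)=0$: $\mathit{State}(v)\gets\mathit{Beep}$, $\mathit{Induced}(v)\gets\mathit{false}$. Rounds are numbered so that round $0$ is the first round at whose beginning some node is active; $V_A^0$ is the set of nodes activated by the adversary in round $0$. Virtual counter: if $v$ is activated in round $t_0$ then $c_{t_0}(v)=0$, and $c_{t+1}(v)=c_t(v)+a$, where $a\in\{1,2\}$ is the amount added to $\delta(v)$ (before reduction mod $T$) in round $t$. *)

theory Defs
  imports Main "HOL-Number_Theory.Cong"
begin

datatype nstate = Inactive | Beep | Listen

record 'v cfg =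
  dlt :: "'v \<Rightarrow> nat"
  st  :: "'v \<Rightarrow> nstate"
  ind :: "'v \<Rightarrow> bool"
  cnt :: "'v \<Rightarrow> nat"

definition CP :: "nat \<Rightarrow> nat set" where
  "CP T = {c. c mod 4 = 0 \<and> int T - int c > 3}"

definition heard :: "('v \<Rightarrow> 'v \<Rightarrow> bool) \<Rightarrow> 'v cfg \<Rightarrow> 'v \<Rightarrow> bool" where
  "heard E C v = (\<exists>u. E u v \<and> st C u = Beep)"

definition step :: "nat \<Rightarrow> ('v \<Rightarrow> 'v \<Rightarrow> bool) \<Rightarrow> 'v cfg \<Rightarrow> 'v cfg" where
  "step T E C =
    \<lparr> dlt = (\<lambda>v. case st C v of
               Inactive \<Rightarrow> dlt C v
             | Beep \<Rightarrow> (dlt C v + 1) mod T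
             | Listen \<Rightarrow>
                 (if heard E C v \<and> (\<exists>c\<in>CP T. [int (dlt C v) = int c - 1] (mod int T))
                  then (dlt C v + 2) mod T else (dlt C v + 1) mod T)),
      st = (\<lambda>v. case st C v of
               Inactive \<Rightarrow> Inactive
             | Beep \<Rightarrow> Listen
             | Listen \<Rightarrow>
                 (if heard E C v then
                    (if (\<exists>c\<in>CP T. [int (dlt C v) = int c - 1] (mod int T)) then Beep else Listen)
                  else
                    (if (ind C v \<and> (dlt C v + 1) mod T \<in> CP T) \<or> (dlt C v + 1) mod T = 0
                     then Beep else Listen))),
      ind = (\<lambda>v. case st C v of
               Inactive \<Rightarrow> ind C v
             | Beep \<Rightarrow> ind C v
             | Listen \<Rightarrow>
                 (if heard E C v then
                    (if (\<exists>c\<in>CP T. [int (dlt C v) = int c - 1] (mod int T)) then True else ind C v)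
                  else
                    (if (ind C v \<and> (dlt C v + 1) mod T \<in> CP T) \<or> (dlt C v + 1) mod T = 0
                     then False else ind C v))),
      cnt = (\<lambda>v. case st C v of
               Inactive \<Rightarrow> cnt C v
             | Beep \<Rightarrow> cnt C v + 1
             | Listen \<Rightarrow>
                 (if heard E C v \<and> (\<exists>c\<in>CP T. [int (dlt C v) = int c - 1] (mod int T))
                  then cnt C v + 2 else cnt C v + 1)) \<rparr>"

definition activate :: "('v \<Rightarrow> bool) \<Rightarrow> 'v cfg \<Rightarrow> 'v cfg" where
  "activate act C =
    \<lparr> dlt = (\<lambda>v. if st C v = Inactive \<and> act v then 1 else dlt C v),
      st  = (\<lambda>v. if st C v = Inactive \<and> act v then Beep else st C v),
      ind = (\<lambda>v. if st C v = Inactive \<and> act v then True else ind C v),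
      cnt = (\<lambda>v. if st C v = Inactive \<and> act v then 0 else cnt C v) \<rparr>"

definition init_cfg :: "'v cfg" where
  "init_cfg = \<lparr> dlt = (\<lambda>_. 0), st = (\<lambda>_. Inactive), ind = (\<lambda>_. False), cnt = (\<lambda>_. 0) \<rparr>"

(* exec T E adv t = configuration at the beginning of round t (after activations of round t);
   adv t = set of nodes the adversary activates in round t *)
primrec exec :: "nat \<Rightarrow> ('v \<Rightarrow> 'v \<Rightarrow> bool) \<Rightarrow> (nat \<Rightarrow> 'v set) \<Rightarrow> nat \<Rightarrow> 'v cfg" where
  "exec T E adv 0 = activate (\<lambda>v. v \<in> adv 0) init_cfg"
| "exec T E adv (Suc t) =
     activate (\<lambda>v. v \<in> adv (Suc t) \<or> heard E (exec T E adv t) v) (step T E (exec T E adv t))"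

definition active :: "nat \<Rightarrow> ('v \<Rightarrow> 'v \<Rightarrow> bool) \<Rightarrow> (nat \<Rightarrow> 'v set) \<Rightarrow> nat \<Rightarrow> 'v \<Rightarrow> bool" where
  "active T E adv t v = (st (exec T E adv t) v \<noteq> Inactive)"

end

theory Submission imports Defs begin

text \<open>The virtual counter of an active node grows by 1 per round, except that it grows by 2 when the
node listens, hears a beep, and its \<open>\<delta>\<close> sits just before a checkpoint. By induction over
the execution one shows that \<open>\<delta> = c + 1 (mod T)\<close>, that beeping nodes sit at a checkpoint
or one past it, that an active neighbour of an inactive node is a fresh beeper, and that the counters
of neighbours differ by at most 2, with equality only when the larger one beeps and the smaller one is
about to jump. Now if a node \<open>w\<close> whose counter ties the maximum jumped by 2, it would hear a beeper
\<open>u\<close> with \<open>c(u) \<le> c(w) \<le> c(u) + 1\<close>; then \<open>\<delta>(w)\<close> is a checkpoint or one past it,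
which is never just before a checkpoint. So a node with maximal counter stays maximal, since it
gains at least 1 per round while nodes behind it gain at most 2.\<close>

definition pre_checkpoint :: "nat \<Rightarrow> nat \<Rightarrow> bool" where
  "pre_checkpoint T d \<longleftrightarrow> (\<exists>c\<in>CP T. [int d = int c - 1] (mod int T))"

text \<open>A beep is triggered either at a checkpoint, or by hearing at \<open>c - 1\<close>, which moves
\<open>\<delta>\<close> to \<open>c + 1\<close>.\<close>

definition beep_phase :: "nat \<Rightarrow> nat set" where
  "beep_phase T = CP T \<union> Suc ` CP T"

lemma CP_iff: "c \<in> CP T \<longleftrightarrow> c mod 4 = 0 \<and> c + 4 \<le> T"
  unfolding CP_def by auto

lemma zero_CP: "4 \<le> T \<Longrightarrow> 0 \<in> CP T"
  by (simp add: CP_iff)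

lemma one_beep_phase: "4 \<le> T \<Longrightarrow> 1 \<in> beep_phase T"
  using zero_CP by (force simp: beep_phase_def)

lemma pre_checkpoint_iff:
  assumes "d < T"
  shows "pre_checkpoint T d \<longleftrightarrow> Suc d mod T \<in> CP T"
proof
  assume "pre_checkpoint T d"
  then obtain c where c: "c \<in> CP T" "[int d + 1 = int c] (mod int T)"
    unfolding pre_checkpoint_def by (metis cong_add_rcancel diff_add_cancel)
  then have "c < T" by (simp add: CP_iff)
  have "int (Suc d mod T) = int c"
    using c(2) \<open>c < T\<close> by (simp add: cong_def zmod_int add.commute)
  with c(1) show "Suc d mod T \<in> CP T" by simp
next
  assume "Suc d mod T \<in> CP T"
  moreover have "[int (Suc d mod T) = int d + 1] (mod int T)"
    by (simp add: cong_def zmod_int add.commute)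
  then have "[int d = int (Suc d mod T) - 1] (mod int T)"
    by (metis cong_diff cong_refl cong_sym add_diff_cancel_right')
  ultimately show "pre_checkpoint T d"
    unfolding pre_checkpoint_def by blast
qed

lemma beep_phase_not_pre_checkpoint:
  assumes "d \<in> beep_phase T"
  shows "\<not> pre_checkpoint T d"
proof -
  obtain c where "c \<in> CP T" "d = c \<or> d = Suc c"
    using assms unfolding beep_phase_def by blast
  then show ?thesis
    by (auto simp: pre_checkpoint_iff CP_iff) presburger+
qed

lemma beep_phase_Suc_not_pre_checkpoint:
  assumes "d \<in> beep_phase T"
  shows "\<not> pre_checkpoint T (Suc d mod T)"
proof -
  obtain c where "c \<in> CP T" "d = c \<or> d = Suc c"
    using assms unfolding beep_phase_def by blast
  then show ?thesis
    by (auto simp: pre_checkpoint_iff CP_iff) presburger+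
qed

lemma pre_checkpoint_not_CP:
  assumes "e < T" "pre_checkpoint T e"
  shows "e \<notin> CP T"
  using assms by (auto simp: pre_checkpoint_iff CP_iff) presburger+

lemma pre_checkpoint_Suc_imp_not_pre_checkpoint:
  assumes "d < T" "pre_checkpoint T (Suc d mod T)"
  shows "\<not> pre_checkpoint T d"
proof (cases "Suc d = T")
  case True
  then show ?thesis using assms by (auto simp: pre_checkpoint_iff CP_iff)
next
  case False
  then show ?thesis using assms by (auto simp: pre_checkpoint_iff CP_iff) presburger+
qed

lemma pre_checkpoint_add_2_beep_phase:
  assumes "d < T" "pre_checkpoint T d"
  shows "(d + 2) mod T \<in> beep_phase T"
proof -
  have c: "Suc d mod T \<in> CP T" using assms pre_checkpoint_iff by blast
  then have "Suc (Suc d mod T) < T" by (simp add: CP_iff)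
  then have "(d + 2) mod T = Suc (Suc d mod T)"
    by (metis add_2_eq_Suc' mod_Suc_eq mod_less)
  with c show ?thesis by (simp add: beep_phase_def)
qed

definition counter_increment :: "nat \<Rightarrow> ('v \<Rightarrow> 'v \<Rightarrow> bool) \<Rightarrow> 'v cfg \<Rightarrow> 'v \<Rightarrow> nat" where
  "counter_increment T E C x =
    (if st C x = Listen \<and> heard E C x \<and> pre_checkpoint T (dlt C x) then 2 else 1)"

lemma counter_increment_cases: "counter_increment T E C x = 1 \<or> counter_increment T E C x = 2"
  by (simp add: counter_increment_def)

lemma counter_increment_eq_2_iff:
  "counter_increment T E C x = 2 \<longleftrightarrow> st C x = Listen \<and> heard E C x \<and> pre_checkpoint T (dlt C x)"
  by (simp add: counter_increment_def)

lemma cnt_step: "st C x \<noteq> Inactive \<Longrightarrow> cnt (step T E C) x = cnt C x + counter_increment T E C x"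
  by (cases "st C x") (auto simp: step_def counter_increment_def pre_checkpoint_def)

lemma dlt_step: "st C x \<noteq> Inactive \<Longrightarrow> dlt (step T E C) x = (dlt C x + counter_increment T E C x) mod T"
  by (cases "st C x") (auto simp: step_def counter_increment_def pre_checkpoint_def)

lemma st_step_eq_Inactive_iff: "st (step T E C) x = Inactive \<longleftrightarrow> st C x = Inactive"
  by (cases "st C x") (auto simp: step_def)

lemma st_step_eq_Beep_iff:
  "st (step T E C) x = Beep \<longleftrightarrow> st C x = Listen \<and>
    (if heard E C x then pre_checkpoint T (dlt C x)
     else (ind C x \<and> Suc (dlt C x) mod T \<in> CP T) \<or> Suc (dlt C x) mod T = 0)"
  by (cases "st C x") (auto simp: step_def pre_checkpoint_def)

abbreviation next_cfg :: "nat \<Rightarrow> ('v \<Rightarrow> 'v \<Rightarrow> bool) \<Rightarrow> ('v \<Rightarrow> bool) \<Rightarrow> 'v cfg \<Rightarrow> 'v cfg" where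
  "next_cfg T E a C \<equiv> activate a (step T E C)"

lemma exec_Suc_next_cfg:
  "exec T E adv (Suc t) = next_cfg T E (\<lambda>v. v \<in> adv (Suc t) \<or> heard E (exec T E adv t) v) (exec T E adv t)"
  by simp

lemma next_cfg_active:
  assumes "st C x \<noteq> Inactive"
  shows "st (next_cfg T E a C) x = st (step T E C) x"
    and "st (next_cfg T E a C) x \<noteq> Inactive"
    and "cnt (next_cfg T E a C) x = cnt C x + counter_increment T E C x"
    and "dlt (next_cfg T E a C) x = (dlt C x + counter_increment T E C x) mod T"
  using assms by (simp_all add: activate_def st_step_eq_Inactive_iff cnt_step dlt_step)

lemma next_cfg_activated:
  assumes "st C x = Inactive" "st (next_cfg T E a C) x \<noteq> Inactive"
  shows "st (next_cfg T E a C) x = Beep" "dlt (next_cfg T E a C) x = 1" "cnt (next_cfg T E a C) x = 0"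
  using assms by (simp_all add: activate_def st_step_eq_Inactive_iff split: if_splits)

lemma next_cfg_Inactive:
  assumes "st (next_cfg T E a C) x = Inactive"
  shows "st C x = Inactive" "\<not> a x"
  using assms by (auto simp: activate_def st_step_eq_Inactive_iff split: if_splits)

definition counter_phase_consistent :: "nat \<Rightarrow> 'v cfg \<Rightarrow> bool" where
  "counter_phase_consistent T C \<longleftrightarrow> (\<forall>x. st C x \<noteq> Inactive \<longrightarrow> dlt C x = Suc (cnt C x) mod T)"

definition beeps_in_beep_phase :: "nat \<Rightarrow> 'v cfg \<Rightarrow> bool" where
  "beeps_in_beep_phase T C \<longleftrightarrow> (\<forall>x. st C x = Beep \<longrightarrow> dlt C x \<in> beep_phase T)"

definition inactive_neighbours_fresh :: "('v \<Rightarrow> 'v \<Rightarrow> bool) \<Rightarrow> 'v cfg \<Rightarrow> bool" where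
  "inactive_neighbours_fresh E C \<longleftrightarrow>
    (\<forall>x y. E x y \<longrightarrow> st C x \<noteq> Inactive \<longrightarrow> st C y = Inactive \<longrightarrow> st C x = Beep \<and> cnt C x = 0)"

definition neighbour_counters_close :: "nat \<Rightarrow> ('v \<Rightarrow> 'v \<Rightarrow> bool) \<Rightarrow> 'v cfg \<Rightarrow> bool" where
  "neighbour_counters_close T E C \<longleftrightarrow>
    (\<forall>x y. E x y \<longrightarrow> st C x \<noteq> Inactive \<longrightarrow> st C y \<noteq> Inactive \<longrightarrow>
      cnt C y \<le> cnt C x + 2 \<and>
      (cnt C y = cnt C x + 2 \<longrightarrow> st C y = Beep \<and> st C x = Listen \<and> pre_checkpoint T (dlt C x)))"

lemma dlt_less_if_counter_phase_consistent:
  "counter_phase_consistent T C \<Longrightarrow> st C x \<noteq> Inactive \<Longrightarrow> 0 < T \<Longrightarrow> dlt C x < T"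
  by (simp add: counter_phase_consistent_def)

lemma counter_phase_consistent_next_cfg:
  assumes "1 < T" "counter_phase_consistent T C"
  shows "counter_phase_consistent T (next_cfg T E a C)"
  unfolding counter_phase_consistent_def
proof (intro allI impI)
  fix x assume x: "st (next_cfg T E a C) x \<noteq> Inactive"
  show "dlt (next_cfg T E a C) x = Suc (cnt (next_cfg T E a C) x) mod T"
  proof (cases "st C x = Inactive")
    case True
    then show ?thesis using next_cfg_activated[OF True x] assms(1) by simp
  next
    case False
    then show ?thesis using assms(2) next_cfg_active[OF False]
      by (simp add: counter_phase_consistent_def mod_add_left_eq)
  qed
qed

lemma beeps_in_beep_phase_next_cfg:
  assumes "4 \<le> T" "counter_phase_consistent T C" "beeps_in_beep_phase T C"
  shows "beeps_in_beep_phase T (next_cfg T E a C)"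
  unfolding beeps_in_beep_phase_def
proof (intro allI impI)
  fix x assume x: "st (next_cfg T E a C) x = Beep"
  show "dlt (next_cfg T E a C) x \<in> beep_phase T"
  proof (cases "st C x = Inactive")
    case True
    then show ?thesis using next_cfg_activated[OF True] x one_beep_phase[OF assms(1)] by simp
  next
    case active: False
    have "st (step T E C) x = Beep" using x next_cfg_active(1)[OF active] by simp
    then have listen: "st C x = Listen" and beep_cond: "if heard E C x then pre_checkpoint T (dlt C x)
        else (ind C x \<and> Suc (dlt C x) mod T \<in> CP T) \<or> Suc (dlt C x) mod T = 0"
      unfolding st_step_eq_Beep_iff by blast+
    show ?thesis
    proof (cases "heard E C x")
      case True
      then have "pre_checkpoint T (dlt C x)" using beep_cond by simp
      moreover have "dlt C x < T"
        using dlt_less_if_counter_phase_consistent[OF assms(2) active] assms(1) by simp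
      ultimately show ?thesis
        using pre_checkpoint_add_2_beep_phase listen True next_cfg_active(4)[OF active]
        by (simp add: counter_increment_def)
    next
      case False
      then have "Suc (dlt C x) mod T \<in> CP T" using beep_cond zero_CP[OF assms(1)] by auto
      then show ?thesis
        using False next_cfg_active(4)[OF active] by (simp add: counter_increment_def beep_phase_def)
    qed
  qed
qed

lemma inactive_neighbours_fresh_next_cfg:
  assumes "\<And>x. heard E C x \<Longrightarrow> a x" and fresh: "inactive_neighbours_fresh E C"
  shows "inactive_neighbours_fresh E (next_cfg T E a C)"
  unfolding inactive_neighbours_fresh_def
proof (intro allI impI)
  fix x y assume xy: "E x y" and x: "st (next_cfg T E a C) x \<noteq> Inactive"
    and y: "st (next_cfg T E a C) y = Inactive"
  have "st C x = Inactive"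
  proof (rule ccontr)
    assume "st C x \<noteq> Inactive"
    then have "st C x = Beep"
      using fresh xy next_cfg_Inactive(1)[OF y] unfolding inactive_neighbours_fresh_def by blast
    then have "heard E C y" using xy unfolding heard_def by blast
    then show False using assms(1) next_cfg_Inactive(2)[OF y] by blast
  qed
  from next_cfg_activated(1,3)[OF this x]
  show "st (next_cfg T E a C) x = Beep \<and> cnt (next_cfg T E a C) x = 0" by blast
qed

lemma jump_past_neighbour_witness:
  assumes T: "4 \<le> T" and phase: "counter_phase_consistent T C"
    and beeps: "beeps_in_beep_phase T C"
    and x: "st C x \<noteq> Inactive" and y: "st C y \<noteq> Inactive"
    and behind: "cnt C y = Suc (cnt C x)" and jump: "counter_increment T E C y = 2"
  shows "st (next_cfg T E a C) x = Listen" "st (next_cfg T E a C) y = Beep"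
    and "pre_checkpoint T (dlt (next_cfg T E a C) x)"
proof -
  have "st C y = Listen" "heard E C y" and y_pre: "pre_checkpoint T (dlt C y)"
    using jump by (auto simp: counter_increment_eq_2_iff)
  then show "st (next_cfg T E a C) y = Beep"
    using next_cfg_active(1)[OF y] by (simp add: st_step_eq_Beep_iff)
  have dlt_y: "dlt C y = Suc (dlt C x) mod T"
    using phase x y behind by (simp add: counter_phase_consistent_def mod_Suc_eq)
  have y_pre': "pre_checkpoint T (Suc (dlt C x) mod T)" using y_pre dlt_y by simp
  have x_no_jump: "\<not> pre_checkpoint T (dlt C x)"
    using pre_checkpoint_Suc_imp_not_pre_checkpoint[OF _ y_pre']
      dlt_less_if_counter_phase_consistent[OF phase x] T by simp
  have "st C x \<noteq> Beep"
  proof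
    assume "st C x = Beep"
    then have "dlt C x \<in> beep_phase T" using beeps by (simp add: beeps_in_beep_phase_def)
    then show False using beep_phase_Suc_not_pre_checkpoint y_pre' by blast
  qed
  have "Suc (dlt C x) mod T \<notin> CP T"
    using pre_checkpoint_not_CP[OF _ y_pre'] T by simp
  then have "st (step T E C) x \<noteq> Beep"
    using x_no_jump zero_CP[OF T] unfolding st_step_eq_Beep_iff by (metis (full_types))
  moreover have "st (step T E C) x \<noteq> Inactive"
    using x unfolding st_step_eq_Inactive_iff .
  ultimately show "st (next_cfg T E a C) x = Listen"
    using next_cfg_active(1)[OF x] by (cases "st (step T E C) x") auto
  have "counter_increment T E C x = 1"
    using x_no_jump by (simp add: counter_increment_def)
  then show "pre_checkpoint T (dlt (next_cfg T E a C) x)"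
    using next_cfg_active(4)[OF x] y_pre' by simp
qed

lemma neighbour_counters_close_next_cfg:
  assumes T: "4 \<le> T" and sym: "\<And>x y. E x y \<Longrightarrow> E y x"
    and phase: "counter_phase_consistent T C" and beeps: "beeps_in_beep_phase T C"
    and fresh: "inactive_neighbours_fresh E C" and close: "neighbour_counters_close T E C"
  shows "neighbour_counters_close T E (next_cfg T E a C)"
  unfolding neighbour_counters_close_def
proof (intro allI impI)
  fix x y assume xy: "E x y" and x': "st (next_cfg T E a C) x \<noteq> Inactive"
    and y': "st (next_cfg T E a C) y \<noteq> Inactive"
  let ?C' = "next_cfg T E a C"
  show "cnt ?C' y \<le> cnt ?C' x + 2 \<and>
    (cnt ?C' y = cnt ?C' x + 2 \<longrightarrow> st ?C' y = Beep \<and> st ?C' x = Listen \<and> pre_checkpoint T (dlt ?C' x))"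
  proof (cases "st C y = Inactive")
    case True
    then show ?thesis using next_cfg_activated[OF True y'] by simp
  next
    case y: False
    show ?thesis
    proof (cases "st C x = Inactive")
      case True
      then have "st C y = Beep" "cnt C y = 0"
        using fresh sym[OF xy] y by (auto simp: inactive_neighbours_fresh_def)
      then show ?thesis
        using next_cfg_activated[OF True x'] next_cfg_active(3)[OF y] by (simp add: counter_increment_def)
    next
      case x: False
      have cnt': "cnt ?C' x = cnt C x + counter_increment T E C x"
        "cnt ?C' y = cnt C y + counter_increment T E C y"
        using next_cfg_active(3)[OF x] next_cfg_active(3)[OF y] by blast+
      have bound: "cnt C y \<le> cnt C x + 2"
        and tight: "cnt C y = cnt C x + 2 \<Longrightarrow> st C y = Beep \<and> st C x = Listen \<and> pre_checkpoint T (dlt C x)"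
        using close xy x y by (auto simp: neighbour_counters_close_def)
      consider "cnt C y = cnt C x + 2"
        | "cnt C y = Suc (cnt C x)" "counter_increment T E C y = 2" "counter_increment T E C x = 1"
        | "cnt C y + counter_increment T E C y < cnt C x + counter_increment T E C x + 2"
        using bound counter_increment_cases[of T E C x] counter_increment_cases[of T E C y] by fastforce
      then show ?thesis
      proof cases
        case 1
        with tight have "st C y = Beep" "counter_increment T E C x = 2"
          using sym[OF xy] by (auto simp: counter_increment_def heard_def)
        then show ?thesis using 1 cnt' by (simp add: counter_increment_def)
      next
        case 2
        then show ?thesis
          using jump_past_neighbour_witness[OF T phase beeps x y] cnt' by simp
      next
        case 3
        then show ?thesis using cnt' by simp
      qed
    qed
  qed
qed

definition fs_invariant :: "nat \<Rightarrow> ('v \<Rightarrow> 'v \<Rightarrow> bool) \<Rightarrow> 'v cfg \<Rightarrow> bool" where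
  "fs_invariant T E C \<longleftrightarrow> counter_phase_consistent T C \<and> beeps_in_beep_phase T C \<and>
    inactive_neighbours_fresh E C \<and> neighbour_counters_close T E C"

lemma fs_invariant_exec:
  assumes "4 \<le> T" "\<And>x y. E x y \<Longrightarrow> E y x"
  shows "fs_invariant T E (exec T E adv t)"
proof (induction t)
  case 0
  show ?case using one_beep_phase[OF assms(1)] assms(1)
    by (auto simp: fs_invariant_def counter_phase_consistent_def beeps_in_beep_phase_def
      inactive_neighbours_fresh_def neighbour_counters_close_def activate_def init_cfg_def)
next
  case (Suc t)
  then have "counter_phase_consistent T (exec T E adv t)" "beeps_in_beep_phase T (exec T E adv t)"
    "inactive_neighbours_fresh E (exec T E adv t)" "neighbour_counters_close T E (exec T E adv t)"
    by (simp_all add: fs_invariant_def)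
  with assms show ?case
    unfolding exec_Suc_next_cfg fs_invariant_def
    by (simp add: counter_phase_consistent_next_cfg beeps_in_beep_phase_next_cfg
      inactive_neighbours_fresh_next_cfg neighbour_counters_close_next_cfg)
qed

lemma maximal_counter_no_jump:
  assumes inv: "fs_invariant T E C" and w: "st C w \<noteq> Inactive"
    and max: "\<And>u. st C u \<noteq> Inactive \<Longrightarrow> cnt C u \<le> cnt C w"
  shows "counter_increment T E C w = 1"
proof (rule ccontr)
  have phase: "counter_phase_consistent T C" and beeps: "beeps_in_beep_phase T C"
    and close: "neighbour_counters_close T E C"
    using inv by (simp_all add: fs_invariant_def)
  assume "counter_increment T E C w \<noteq> 1"
  then have w_listens: "st C w = Listen" and "heard E C w" and w_pre: "pre_checkpoint T (dlt C w)"
    using counter_increment_cases[of T E C w] by (auto simp: counter_increment_eq_2_iff)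
  then obtain u where uw: "E u w" and u_beeps: "st C u = Beep" by (auto simp: heard_def)
  then have u: "st C u \<noteq> Inactive" by simp
  have "cnt C w \<le> cnt C u + 2 \<and> (cnt C w = cnt C u + 2 \<longrightarrow> st C w = Beep)"
    using close uw u w unfolding neighbour_counters_close_def by blast
  then have "cnt C w \<le> cnt C u + 2" "cnt C w \<noteq> cnt C u + 2"
    using w_listens by auto
  moreover have "cnt C u \<le> cnt C w" using max[OF u] .
  ultimately have "cnt C w = cnt C u \<or> cnt C w = Suc (cnt C u)" by linarith
  then have "dlt C w = dlt C u \<or> dlt C w = Suc (dlt C u) mod T"
    using phase u w unfolding counter_phase_consistent_def by (metis mod_Suc_eq)
  moreover have "dlt C u \<in> beep_phase T"
    using beeps u_beeps by (simp add: beeps_in_beep_phase_def)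
  ultimately show False
    using w_pre beep_phase_not_pre_checkpoint beep_phase_Suc_not_pre_checkpoint by metis
qed

lemma maximal_counter_next_cfg:
  assumes "fs_invariant T E C" and v: "st C v \<noteq> Inactive"
    and max: "\<And>u. st C u \<noteq> Inactive \<Longrightarrow> cnt C u \<le> cnt C v"
    and w: "st (next_cfg T E a C) w \<noteq> Inactive"
  shows "cnt (next_cfg T E a C) w \<le> cnt (next_cfg T E a C) v"
proof (cases "st C w = Inactive")
  case True
  then show ?thesis using next_cfg_activated(3)[OF True w] by simp
next
  case False
  have "cnt C v + 1 \<le> cnt (next_cfg T E a C) v"
    using next_cfg_active(3)[OF v] counter_increment_cases[of T E C v] by auto
  moreover have "cnt (next_cfg T E a C) w \<le> cnt C w + 2"
    using next_cfg_active(3)[OF False] counter_increment_cases[of T E C w] by auto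
  moreover have "cnt (next_cfg T E a C) w = cnt C w + 1" if "cnt C w = cnt C v"
    using next_cfg_active(3)[OF False] maximal_counter_no_jump[OF assms(1) False] max that by simp
  ultimately show ?thesis
    using max[OF False] by (cases "cnt C w = cnt C v") auto
qed

lemma active_exec_Suc: "active T E adv t x \<Longrightarrow> active T E adv (Suc t) x"
  unfolding active_def exec_Suc_next_cfg by (rule next_cfg_active(2))

lemma active_exec_mono: "t \<le> t' \<Longrightarrow> active T E adv t x \<Longrightarrow> active T E adv t' x"
  by (induction t' rule: dec_induct) (auto intro: active_exec_Suc)

lemma active_exec_0_iff: "active T E adv 0 x \<longleftrightarrow> x \<in> adv 0"
  by (simp add: active_def activate_def init_cfg_def)

theorem mainTheorem9:
  fixes E :: "'v::finite \<Rightarrow> 'v \<Rightarrow> bool"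
    and adv :: "nat \<Rightarrow> 'v set"
    and T t :: nat and v :: 'v
  assumes "T \<ge> 4"
    and "\<And>x y. E x y \<Longrightarrow> E y x"
    and "\<And>x. \<not> E x x"
    and "\<And>x y. E\<^sup>*\<^sup>* x y"
    and "v \<in> adv 0"
    and "\<And>w. w \<noteq> v \<Longrightarrow> active T E adv t w \<Longrightarrow> cnt (exec T E adv t) v \<ge> cnt (exec T E adv t) w"
  shows "\<forall>t' > t. \<forall>w. active T E adv t' w \<longrightarrow> cnt (exec T E adv t') v \<ge> cnt (exec T E adv t') w"
proof -
  have v_active: "active T E adv t' v" for t'
    by (rule active_exec_mono[OF le0]) (simp add: active_exec_0_iff assms(5))
  have "\<forall>w. active T E adv t' w \<longrightarrow> cnt (exec T E adv t') w \<le> cnt (exec T E adv t') v"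
    if "t \<le> t'" for t'
    using that
  proof (induction t' rule: dec_induct)
    case base
    show ?case using assms(6) by (metis order_refl)
  next
    case (step n)
    have max: "\<And>u. st (exec T E adv n) u \<noteq> Inactive \<Longrightarrow> cnt (exec T E adv n) u \<le> cnt (exec T E adv n) v"
      using step.IH unfolding active_def by blast
    show ?case
    proof (intro allI impI)
      fix w assume "active T E adv (Suc n) w"
      then show "cnt (exec T E adv (Suc n)) w \<le> cnt (exec T E adv (Suc n)) v"
        unfolding active_def exec_Suc_next_cfg
        using maximal_counter_next_cfg[OF fs_invariant_exec[OF assms(1,2)] v_active[of n, unfolded active_def] max]
        by blast
    qed
  qed
  then show ?thesis by (simp add: less_imp_le)
qed

end
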